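(* Let $n\in\mathbb{N}$ and let $E$ be a symmetric function space on $(0,\infty)$. If $E^0\cap L_\infty\subset L_{n,1}$, then $E\cap L_\infty\subset L_{n,1}$.
   Context: A symmetric function space on $(0,\infty)$ is a Banach space $E$ of real-valued measurable functions such that whenever $y\in E$ and $x$ is measurable with $\mu(x)\le\mu(y)$ ($\mu$ = decreasing rearrangement of the absolute value), then $x\in E$ and $\|x\|_E\le\|y\|_E$. $E^0$ is the closure of $L_1\cap L_\infty$ in $E$. $L_{n,1}$ is the Lorentz space of measurable $f$ with $\|f\|_{L_{n,1}}=\int_0^\infty\mu(t;f)\,d(t^{1/n})<\infty$. *)

theory Defs
  imports "HOL-Analysis.Analysis"
begin

text \<open>Functions on (0,\<infinity>) are modelled as functions real \<Rightarrow> real; only their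
 values on {0<..} matter. The underlying measure space is Lebesgue measure on (0,\<infinity>).\<close>

abbreviation M0 :: "real measure" where
  "M0 \<equiv> restrict_space lebesgue {0<..}"

definition meas :: "(real \<Rightarrow> real) \<Rightarrow> bool" where
  "meas f \<longleftrightarrow> f \<in> borel_measurable M0"

text \<open>Decreasing rearrangement of |f|:
  mu(t;f) = inf { s \<ge> 0 : Leb{x>0. |f x| > s} \<le> t } (value \<infinity> if the set is empty).\<close>
definition drearr :: "real \<Rightarrow> (real \<Rightarrow> real) \<Rightarrow> ennreal" where
  "drearr t f = Inf {ennreal s | s. 0 \<le> s \<and>
       emeasure M0 {x \<in> {0<..}. s < \<bar>f x\<bar>} \<le> ennreal t}"

definition Linf :: "(real \<Rightarrow> real) set" where
  "Linf = {f. meas f \<and> (\<exists>C. AE x in M0. \<bar>f x\<bar> \<le> C)}"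

definition L1 :: "(real \<Rightarrow> real) set" where
  "L1 = {f. meas f \<and> integrable M0 f}"

text \<open>Lorentz space L_{n,1}: \<integral>_0^\<infinity> mu(t;f) d(t^(1/n)) < \<infinity>,
  with d(t^(1/n)) = (1/n) t^(1/n - 1) dt.\<close>
definition Lorentz_n1 :: "nat \<Rightarrow> (real \<Rightarrow> real) set" where
  "Lorentz_n1 n = {f. meas f \<and>
     (\<integral>\<^sup>+ t\<in>{0<..}. drearr t f * ennreal ((1 / real n) * t powr (1 / real n - 1)) \<partial>lborel) < \<infinity>}"

text \<open>A symmetric function space (E, N): a Banach space of measurable functions on
 (0,\<infinity>) (functions equal a.e. identified, i.e. N is a norm modulo null functions)
 with the symmetry property.\<close>
definition symmetric_function_space :: "(real \<Rightarrow> real) set \<Rightarrow> ((real \<Rightarrow> real) \<Rightarrow> real) \<Rightarrow> bool" where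
  "symmetric_function_space E N \<longleftrightarrow>
     (\<forall>x\<in>E. meas x) \<and>
     (\<lambda>_. 0) \<in> E \<and>
     (\<forall>x\<in>E. \<forall>y\<in>E. (\<lambda>s. x s + y s) \<in> E) \<and>
     (\<forall>x\<in>E. \<forall>c::real. (\<lambda>s. c * x s) \<in> E) \<and>
     (\<forall>x\<in>E. 0 \<le> N x) \<and>
     (\<forall>x\<in>E. N x = 0 \<longleftrightarrow> (AE s in M0. x s = 0)) \<and>
     (\<forall>x\<in>E. \<forall>y\<in>E. N (\<lambda>s. x s + y s) \<le> N x + N y) \<and>
     (\<forall>x\<in>E. \<forall>c::real. N (\<lambda>s. c * x s) = \<bar>c\<bar> * N x) \<and>
     (\<forall>X::nat \<Rightarrow> real \<Rightarrow> real. (\<forall>k. X k \<in> E) \<and>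
         (\<forall>e>0. \<exists>K. \<forall>k\<ge>K. \<forall>l\<ge>K. N (\<lambda>s. X k s - X l s) < e) \<longrightarrow>
         (\<exists>x\<in>E. (\<lambda>k. N (\<lambda>s. X k s - x s)) \<longlonglongrightarrow> 0)) \<and>
     (\<forall>y\<in>E. \<forall>x. meas x \<and> (\<forall>t>0. drearr t x \<le> drearr t y) \<longrightarrow> x \<in> E \<and> N x \<le> N y)"

definition E0 :: "(real \<Rightarrow> real) set \<Rightarrow> ((real \<Rightarrow> real) \<Rightarrow> real) \<Rightarrow> (real \<Rightarrow> real) set" where
  "E0 E N = {x \<in> E. \<forall>e>0. \<exists>y \<in> E \<inter> L1 \<inter> Linf. N (\<lambda>s. x s - y s) < e}"

end

theory Submission
  imports Defs
begin

text \<open>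
  Suppose x lies in E and is bounded, but the integral of mu(t;x) against d(t^(1/n)) diverges.
  Damp the bounded decreasing function mu(x) by a decreasing weight w tending to 0 so slowly
  that the integral still diverges. Then y = w mu(x) is dominated by mu(x), hence bounded and
  in E, and its tail beyond K is dominated by (sup of w on [K,oo)) mu(x), so y lies in E^0.
  Being decreasing, y satisfies mu(t;y) >= y(2t), so after the dilation t -> 2t its Lorentz
  integral is at least half of the divergent integral of y(t) d(t^(1/n)), contradicting the
  inclusion of E^0 in L_{n,1}.
\<close>

definition lorentz_density :: "nat \<Rightarrow> real \<Rightarrow> real" where
  "lorentz_density n t = (1 / real n) * t powr (1 / real n - 1)"

lemma Lorentz_n1_iff:
  "f \<in> Lorentz_n1 n \<longleftrightarrow>
     meas f \<and> (\<integral>\<^sup>+ t\<in>{0<..}. drearr t f * ennreal (lorentz_density n t) \<partial>lborel) < \<infinity>"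
  by (simp add: Lorentz_n1_def lorentz_density_def)

lemma lorentz_density_decreasing:
  assumes "1 \<le> n" "0 < s" "s \<le> t"
  shows "lorentz_density n t \<le> lorentz_density n s"
  unfolding lorentz_density_def using assms
  by (intro mult_left_mono powr_mono2') (auto simp: field_simps)

lemma borel_measurable_imp_meas: "f \<in> borel_measurable borel \<Longrightarrow> meas f"
  unfolding meas_def
  by (rule measurable_restrict_space1) (use measurable_completion measurable_lborel2 in blast)

lemma borel_measurable_antimono:
  fixes f :: "real \<Rightarrow> real"
  assumes "antimono f"
  shows "f \<in> borel_measurable borel"
proof -
  have "(\<lambda>t. - f t) \<in> borel_measurable borel"
    using assms by (intro borel_measurable_mono) (auto simp: mono_def antimono_def)
  then show ?thesis
    using borel_measurable_uminus[of "\<lambda>t. - f t"] by simp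
qed

lemma emeasure_M0_Ioc: "0 \<le> b \<Longrightarrow> emeasure M0 {0<..b} = ennreal b"
  by (subst emeasure_restrict_space) auto

lemma emeasure_M0_Ioo: "0 \<le> b \<Longrightarrow> emeasure M0 {0<..<b} = ennreal b"
  by (subst emeasure_restrict_space) auto

lemma sets_M0_superlevel:
  assumes "meas f"
  shows "{x \<in> {0<..}. s < \<bar>f x\<bar>} \<in> sets M0"
proof -
  have [measurable]: "f \<in> borel_measurable M0"
    using assms unfolding meas_def .
  have "{x \<in> space M0. s < \<bar>f x\<bar>} \<in> sets M0"
    by measurable
  then show ?thesis by simp
qed

lemma drearr_antimono: "t \<le> t' \<Longrightarrow> drearr t' f \<le> drearr t f"
  unfolding drearr_def
  by (rule Inf_superset_mono) (fastforce intro: order_trans[OF _ ennreal_leI])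

lemma Linf_drearr_bounded:
  assumes "f \<in> Linf"
  obtains B where "0 \<le> B" "\<And>t. drearr t f \<le> ennreal B"
proof -
  from assms obtain C where [measurable]: "f \<in> borel_measurable M0"
    and C: "AE x in M0. \<bar>f x\<bar> \<le> C"
    by (auto simp: Linf_def meas_def)
  have "AE x in M0. \<bar>f x\<bar> \<le> max C 0"
    using C by eventually_elim auto
  moreover have "{x \<in> space M0. \<not> \<bar>f x\<bar> \<le> max C 0} \<in> sets M0"
    by measurable
  ultimately have "emeasure M0 {x \<in> space M0. \<not> \<bar>f x\<bar> \<le> max C 0} = 0"
    by (subst AE_iff_measurable[symmetric]) auto
  then have "drearr t f \<le> ennreal (max C 0)" for t
    unfolding drearr_def by (intro Inf_lower) (auto simp: not_le)
  then show thesis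
    by (rule that[rotated]) simp
qed

lemma drearr_le_if_dominated:
  assumes c: "0 < c" and t: "0 < t"
    and dom: "\<And>\<tau>. 0 < \<tau> \<Longrightarrow> ennreal \<bar>g \<tau>\<bar> \<le> ennreal c * drearr \<tau> x"
  shows "drearr t g \<le> drearr t (\<lambda>s. c * x s)"
  unfolding drearr_def
proof (rule Inf_superset_mono, safe)
  fix s :: real
  assume s: "0 \<le> s" "emeasure M0 {\<tau> \<in> {0<..}. s < \<bar>c * x \<tau>\<bar>} \<le> ennreal t"
  have level: "drearr \<tau> x \<le> ennreal (s / c)" if "t \<le> \<tau>" for \<tau>
  proof -
    have "{\<sigma> \<in> {0<..}. s / c < \<bar>x \<sigma>\<bar>} = {\<sigma> \<in> {0<..}. s < \<bar>c * x \<sigma>\<bar>}"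
      using c by (auto simp: abs_mult field_simps)
    then have "emeasure M0 {\<sigma> \<in> {0<..}. s / c < \<bar>x \<sigma>\<bar>} \<le> ennreal \<tau>"
      using s(2) that by (auto intro: order_trans[OF _ ennreal_leI])
    then show ?thesis
      unfolding drearr_def using s c by (intro Inf_lower) auto
  qed
  then have "\<bar>g \<tau>\<bar> \<le> s" if "t \<le> \<tau>" for \<tau>
  proof -
    have "ennreal \<bar>g \<tau>\<bar> \<le> ennreal c * ennreal (s / c)"
      using dom[of \<tau>] that t mult_left_mono[OF level[OF that], of "ennreal c"]
      by (auto intro: order_trans)
    also have "\<dots> = ennreal s"
      using c s(1) by (simp add: ennreal_mult[symmetric])
    finally show ?thesis
      using s(1) by (simp add: ennreal_le_iff)
  qed
  then have "{\<tau> \<in> {0<..}. s < \<bar>g \<tau>\<bar>} \<subseteq> {0<..<t}"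
    by (auto simp: not_le[symmetric])
  then have "emeasure M0 {\<tau> \<in> {0<..}. s < \<bar>g \<tau>\<bar>} \<le> emeasure M0 {0<..<t}"
    by (rule emeasure_mono) (auto simp: sets_restrict_space_iff)
  then show "\<exists>s'. ennreal s = ennreal s' \<and> 0 \<le> s' \<and>
      emeasure M0 {\<tau> \<in> {0<..}. s' < \<bar>g \<tau>\<bar>} \<le> ennreal t"
    using s(1) t by (auto simp: emeasure_M0_Ioo)
qed

lemma antimono_le_drearr:
  assumes y: "meas y" "antimono y" and "0 \<le> t" "t < t'"
  shows "ennreal (y t') \<le> drearr t y"
  unfolding drearr_def
proof (rule Inf_greatest, safe)
  fix s :: real
  assume s: "0 \<le> s" "emeasure M0 {\<tau> \<in> {0<..}. s < \<bar>y \<tau>\<bar>} \<le> ennreal t"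
  show "ennreal (y t') \<le> ennreal s"
  proof (rule ccontr)
    assume "\<not> ennreal (y t') \<le> ennreal s"
    then have "s < y t'"
      using s(1) by (simp add: ennreal_le_iff not_le)
    then have "{0<..t'} \<subseteq> {\<tau> \<in> {0<..}. s < \<bar>y \<tau>\<bar>}"
      using y(2) by (force simp: antimono_def)
    then have "emeasure M0 {0<..t'} \<le> ennreal t"
      using s(2) emeasure_mono[OF _ sets_M0_superlevel[OF y(1)]] by (blast intro: order_trans)
    then show False
      using \<open>0 \<le> t\<close> \<open>t < t'\<close> by (simp add: emeasure_M0_Ioc ennreal_le_iff)
  qed
qed

lemma symmetric_space_dominated:
  assumes E: "symmetric_function_space E N" and "x \<in> E" "meas g" "0 < c"
    and dom: "\<And>\<tau>. 0 < \<tau> \<Longrightarrow> ennreal \<bar>g \<tau>\<bar> \<le> ennreal c * drearr \<tau> x"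
  shows "g \<in> E" "N g \<le> c * N x"
proof -
  have cx: "(\<lambda>s. c * x s) \<in> E" "N (\<lambda>s. c * x s) = c * N x"
    using E \<open>x \<in> E\<close> \<open>0 < c\<close> by (auto simp: symmetric_function_space_def)
  have "\<forall>t>0. drearr t g \<le> drearr t (\<lambda>s. c * x s)"
    using drearr_le_if_dominated[OF \<open>0 < c\<close> _ dom] by blast
  then show "g \<in> E" "N g \<le> c * N x"
    using E cx \<open>meas g\<close> unfolding symmetric_function_space_def by metis+
qed

lemma nn_integral_tail_unbounded:
  fixes f :: "real \<Rightarrow> ennreal"
  assumes [measurable]: "f \<in> borel_measurable borel"
    and div: "(\<integral>\<^sup>+ t\<in>{0<..}. f t \<partial>lborel) = \<infinity>"
    and fin: "(\<integral>\<^sup>+ t\<in>{0<..T}. f t \<partial>lborel) \<noteq> \<infinity>" and "0 \<le> T"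
  obtains S where "T + 1 \<le> S" "ennreal c \<le> (\<integral>\<^sup>+ t\<in>{T<..S}. f t \<partial>lborel)"
proof -
  let ?D = "density lborel f"
  have D: "emeasure ?D A = (\<integral>\<^sup>+ t\<in>A. f t \<partial>lborel)" if "A \<in> sets borel" for A
    using that by (simp add: emeasure_density)
  have "emeasure ?D {0<..T} + emeasure ?D {T<..} = emeasure ?D {0<..}"
    using \<open>0 \<le> T\<close> by (subst plus_emeasure) (auto intro: arg_cong[where f = "emeasure ?D"])
  then have tail: "emeasure ?D {T<..} = \<infinity>"
    using div fin by (simp add: D ennreal_add_eq_top)
  have "(SUP k. emeasure ?D {T<..T + 1 + real k}) = emeasure ?D (\<Union>k. {T<..T + 1 + real k})"
    by (rule SUP_emeasure_incseq) (auto simp: incseq_def)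
  also have "(\<Union>k. {T<..T + 1 + real k}) = {T<..}"
  proof safe
    fix t assume "T < t"
    obtain k :: nat where "t - T \<le> real k"
      using real_arch_simple by blast
    then show "t \<in> (\<Union>k. {T<..T + 1 + real k})"
      using \<open>T < t\<close> by (auto intro!: exI[of _ k])
  qed simp
  finally have sup: "(SUP k. emeasure ?D {T<..T + 1 + real k}) = \<infinity>"
    using tail by simp
  have "ennreal c < (SUP k. emeasure ?D {T<..T + 1 + real k})"
    unfolding sup by simp
  then obtain k where "ennreal c < emeasure ?D {T<..T + 1 + real k}"
    by (subst (asm) less_SUP_iff) blast
  then have "ennreal c \<le> (\<integral>\<^sup>+ t\<in>{T<..T + 1 + real k}. f t \<partial>lborel)"
    by (simp add: D)
  then show thesis
    by (rule that[rotated]) simp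
qed

lemma nn_integral_divergent_blocks:
  fixes f :: "real \<Rightarrow> ennreal"
  assumes [measurable]: "f \<in> borel_measurable borel"
    and div: "(\<integral>\<^sup>+ t\<in>{0<..}. f t \<partial>lborel) = \<infinity>"
    and fin: "\<And>T. (\<integral>\<^sup>+ t\<in>{0<..T}. f t \<partial>lborel) \<noteq> \<infinity>"
  obtains T :: "nat \<Rightarrow> real" where "incseq T" "\<And>j. real j \<le> T j"
    "\<And>j. ennreal ((real j + 1)\<^sup>2) \<le> (\<integral>\<^sup>+ t\<in>{T j<..T (Suc j)}. f t \<partial>lborel)"
proof -
  have "\<exists>T. \<forall>j. real j \<le> T j \<and> T j + 1 \<le> T (Suc j) \<and>
      ennreal ((real j + 1)\<^sup>2) \<le> (\<integral>\<^sup>+ t\<in>{T j<..T (Suc j)}. f t \<partial>lborel)"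
  proof (rule dependent_nat_choice)
    fix x :: real and j :: nat
    assume "real j \<le> x"
    then have "0 \<le> x"
      using of_nat_0_le_iff[of j] by linarith
    then obtain S where "x + 1 \<le> S" "ennreal ((real j + 1)\<^sup>2) \<le> (\<integral>\<^sup>+ t\<in>{x<..S}. f t \<partial>lborel)"
      using nn_integral_tail_unbounded[OF assms(1) div fin] by blast
    then show "\<exists>S. real (Suc j) \<le> S \<and> x + 1 \<le> S \<and>
        ennreal ((real j + 1)\<^sup>2) \<le> (\<integral>\<^sup>+ t\<in>{x<..S}. f t \<partial>lborel)"
      using \<open>real j \<le> x\<close> by (intro exI[of _ S]) auto
  qed auto
  then obtain T where T: "\<And>j. real j \<le> T j" "\<And>j. T j + 1 \<le> T (Suc j)"
    "\<And>j. ennreal ((real j + 1)\<^sup>2) \<le> (\<integral>\<^sup>+ t\<in>{T j<..T (Suc j)}. f t \<partial>lborel)"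
    by blast
  have "incseq T"
    by (rule incseq_SucI, rule order_trans[OF _ T(2)]) simp
  with T show thesis
    using that by blast
qed

definition block_index :: "(nat \<Rightarrow> real) \<Rightarrow> real \<Rightarrow> nat" where
  "block_index T \<tau> = (LEAST j. \<tau> \<le> T (Suc j))"

definition block_weight :: "(nat \<Rightarrow> real) \<Rightarrow> real \<Rightarrow> real" where
  "block_weight T \<tau> = inverse (real (block_index T \<tau>) + 1)"

lemma block_weight_nonneg: "0 \<le> block_weight T \<tau>"
  by (simp add: block_weight_def)

lemma block_weight_le_1: "block_weight T \<tau> \<le> 1"
  by (simp add: block_weight_def inverse_le_1_iff)

context
  fixes T :: "nat \<Rightarrow> real"
  assumes T_mono: "incseq T" and T_ge: "\<And>j. real j \<le> T j"
begin

lemma block_index_bound: "\<tau> \<le> T (Suc (block_index T \<tau>))"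
proof -
  obtain j :: nat where "\<tau> \<le> real j"
    using real_arch_simple by blast
  then have "\<tau> \<le> T (Suc j)"
    using T_ge[of "Suc j"] by simp
  then show ?thesis
    unfolding block_index_def by (rule LeastI)
qed

lemma block_index_le: "\<tau> \<le> T (Suc j) \<Longrightarrow> block_index T \<tau> \<le> j"
  unfolding block_index_def by (rule Least_le)

lemma le_block_index: "T j < \<tau> \<Longrightarrow> j \<le> block_index T \<tau>"
  using block_index_bound[of \<tau>] T_mono by (metis Suc_le_eq incseqD not_le order.trans leD)

lemma block_index_eq: "\<tau> \<in> {T j<..T (Suc j)} \<Longrightarrow> block_index T \<tau> = j"
  using block_index_le le_block_index by (auto intro: antisym)

lemma mono_block_index: "mono (block_index T)"
  using block_index_le block_index_bound by (meson monoI order_trans)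

lemma filterlim_block_index: "filterlim (\<lambda>\<tau>. real (block_index T \<tau>)) at_top at_top"
  unfolding filterlim_at_top
proof
  fix Z :: real
  obtain j :: nat where "Z \<le> real j"
    using real_arch_simple by blast
  have "eventually (\<lambda>\<tau>. T j < \<tau>) at_top"
    by (rule eventually_gt_at_top)
  then show "eventually (\<lambda>\<tau>. Z \<le> real (block_index T \<tau>)) at_top"
    by (rule eventually_mono) (use \<open>Z \<le> real j\<close> le_block_index in force)
qed

lemma antimono_block_weight: "antimono (block_weight T)"
  using mono_block_index by (auto simp: block_weight_def antimono_def mono_def)

lemma block_weight_tendsto_0: "(block_weight T \<longlongrightarrow> 0) at_top"
  unfolding block_weight_def using filterlim_block_index
  by (intro tendsto_inverse_0_at_top, subst add.commute)
    (rule filterlim_tendsto_add_at_top[OF tendsto_const])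

lemma nn_integral_block_weight_divergent:
  fixes f :: "real \<Rightarrow> ennreal"
  assumes [measurable]: "f \<in> borel_measurable borel"
    and block: "\<And>j. ennreal ((real j + 1)\<^sup>2) \<le> (\<integral>\<^sup>+ t\<in>{T j<..T (Suc j)}. f t \<partial>lborel)"
  shows "(\<integral>\<^sup>+ t\<in>{0<..}. f t * ennreal (block_weight T t) \<partial>lborel) = \<infinity>"
proof -
  have "of_nat j \<le> (\<integral>\<^sup>+ t\<in>{0<..}. f t * ennreal (block_weight T t) \<partial>lborel)" for j
  proof -
    have "(of_nat j :: ennreal) \<le> ennreal (inverse (real j + 1) * (real j + 1)\<^sup>2)"
      unfolding ennreal_of_nat_eq_real_of_nat
      by (intro ennreal_leI) (simp add: power2_eq_square field_simps)
    also have "\<dots> = ennreal (inverse (real j + 1)) * ennreal ((real j + 1)\<^sup>2)"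
      by (simp add: ennreal_mult)
    also have "\<dots> \<le> ennreal (inverse (real j + 1)) * (\<integral>\<^sup>+ t\<in>{T j<..T (Suc j)}. f t \<partial>lborel)"
      by (rule mult_left_mono[OF block]) simp
    also have "\<dots> = (\<integral>\<^sup>+ t. ennreal (inverse (real j + 1)) * (f t * indicator {T j<..T (Suc j)} t) \<partial>lborel)"
      by (rule nn_integral_cmult[symmetric]) simp
    also have "\<dots> \<le> (\<integral>\<^sup>+ t\<in>{0<..}. f t * ennreal (block_weight T t) \<partial>lborel)"
      using T_ge[of j] block_index_eq
      by (intro nn_integral_mono) (auto simp: block_weight_def mult.commute split: split_indicator)
    finally show ?thesis .
  qed
  then have "(SUP j. of_nat j) \<le> (\<integral>\<^sup>+ t\<in>{0<..}. f t * ennreal (block_weight T t) \<partial>lborel)"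
    by (rule SUP_least)
  then show ?thesis
    by (simp add: ennreal_SUP_of_nat_eq_top top_unique)
qed

end

text \<open>
  Either f has infinite mass on some (0,T], and the cut-off at T works, or (0,oo) splits into
  blocks (T_j, T_(j+1)] of mass at least (j+1)^2, and the weight 1/(j+1) on the j-th block
  still leaves mass at least j+1 there.
\<close>
lemma slowly_vanishing_weight:
  fixes f :: "real \<Rightarrow> ennreal"
  assumes [measurable]: "f \<in> borel_measurable borel"
    and div: "(\<integral>\<^sup>+ t\<in>{0<..}. f t \<partial>lborel) = \<infinity>"
  obtains w :: "real \<Rightarrow> real" where "antimono w" "\<And>\<tau>. 0 \<le> w \<tau>" "\<And>\<tau>. w \<tau> \<le> 1"
    "(w \<longlongrightarrow> 0) at_top" "(\<integral>\<^sup>+ t\<in>{0<..}. f t * ennreal (w t) \<partial>lborel) = \<infinity>"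
proof (cases "\<exists>T. (\<integral>\<^sup>+ t\<in>{0<..T}. f t \<partial>lborel) = \<infinity>")
  case True
  then obtain T where T: "(\<integral>\<^sup>+ t\<in>{0<..T}. f t \<partial>lborel) = \<infinity>" ..
  have "(\<integral>\<^sup>+ t\<in>{0<..T}. f t \<partial>lborel) \<le>
      (\<integral>\<^sup>+ t\<in>{0<..}. f t * ennreal (indicator {..T} t) \<partial>lborel)"
    by (rule nn_integral_mono) (auto split: split_indicator)
  then have "(\<integral>\<^sup>+ t\<in>{0<..}. f t * ennreal (indicator {..T} t) \<partial>lborel) = \<infinity>"
    using T by (simp add: top_unique)
  moreover have "((indicator {..T} :: real \<Rightarrow> real) \<longlongrightarrow> 0) at_top"
    by (rule tendsto_eventually) (auto intro: eventually_mono[OF eventually_gt_at_top[of T]])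
  ultimately show thesis
    by (intro that[of "indicator {..T}"]) (auto simp: antimono_def split: split_indicator)
next
  case False
  then obtain T where "incseq T" "\<And>j. real j \<le> T j"
    and "\<And>j. ennreal ((real j + 1)\<^sup>2) \<le> (\<integral>\<^sup>+ t\<in>{T j<..T (Suc j)}. f t \<partial>lborel)"
    using nn_integral_divergent_blocks[OF _ div] by auto
  then show thesis
    by (intro that[of "block_weight T"] antimono_block_weight block_weight_nonneg
        block_weight_le_1 block_weight_tendsto_0 nn_integral_block_weight_divergent) auto
qed

lemma truncation_mem_E_L1_Linf:
  assumes E: "symmetric_function_space E N" and x: "x \<in> E" "x \<in> Linf" and "meas y" "0 < K"
    and dom: "\<And>\<tau>. 0 < \<tau> \<Longrightarrow> ennreal \<bar>y \<tau>\<bar> \<le> drearr \<tau> x"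
  shows "(\<lambda>s. if s \<le> K then y s else 0) \<in> E \<inter> L1 \<inter> Linf"
proof -
  define z where "z s = (if s \<le> K then y s else 0)" for s
  obtain B where "0 \<le> B" and B: "\<And>t. drearr t x \<le> ennreal B"
    using Linf_drearr_bounded[OF x(2)] by blast
  have y_bounded: "\<bar>y \<tau>\<bar> \<le> B" if "0 < \<tau>" for \<tau>
    using order_trans[OF dom[OF that] B] \<open>0 \<le> B\<close> by (simp add: ennreal_le_iff)
  have [measurable]: "y \<in> borel_measurable M0" "(\<lambda>s. s) \<in> borel_measurable M0"
    using \<open>meas y\<close> borel_measurable_imp_meas[of "\<lambda>s. s"] by (simp_all add: meas_def)
  have z_meas: "z \<in> borel_measurable M0"
    unfolding z_def by measurable
  have "z \<in> E"
  proof (rule symmetric_space_dominated(1)[OF E x(1) _ zero_less_one])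
    show "meas z"
      using z_meas by (simp add: meas_def)
    show "ennreal \<bar>z \<tau>\<bar> \<le> ennreal 1 * drearr \<tau> x" if "0 < \<tau>" for \<tau>
      using dom[OF that] by (simp add: z_def)
  qed
  moreover have "z \<in> Linf"
    using y_bounded z_meas \<open>0 \<le> B\<close> by (auto simp: Linf_def meas_def z_def intro!: exI[of _ B] AE_I2)
  moreover have "z \<in> L1"
    unfolding L1_def meas_def
  proof (intro CollectI conjI z_meas integrableI_bounded_set[where A = "{0<..K}" and B = B])
    show "emeasure M0 {0<..K} < \<infinity>"
      using \<open>0 < K\<close> by (simp add: emeasure_M0_Ioc)
  qed (auto simp: sets_restrict_space_iff z_def y_bounded intro!: AE_I2)
  ultimately have "z \<in> E \<inter> L1 \<inter> Linf"
    by blast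
  then show ?thesis
    unfolding z_def .
qed

text \<open>
  The remainder of the truncation of y to (0,K] is dominated by (sup of w on [K,oo)) mu(x),
  whose norm tends to 0.
\<close>
lemma E0_if_dominated_vanishing:
  assumes E: "symmetric_function_space E N" and x: "x \<in> E" "x \<in> Linf" and "meas y"
    and w: "(w \<longlongrightarrow> 0) at_top" "\<And>\<tau>. w \<tau> \<le> 1"
    and dom: "\<And>\<tau>. 0 < \<tau> \<Longrightarrow> ennreal \<bar>y \<tau>\<bar> \<le> ennreal (w \<tau>) * drearr \<tau> x"
  shows "y \<in> E0 E N"
proof -
  have dom1: "ennreal \<bar>y \<tau>\<bar> \<le> drearr \<tau> x" if "0 < \<tau>" for \<tau>
    using dom[OF that] mult_right_mono[OF ennreal_leI[OF w(2)]] by (auto intro: order_trans)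
  have "\<exists>z \<in> E \<inter> L1 \<inter> Linf. N (\<lambda>s. y s - z s) < e" if "0 < e" for e
  proof -
    have "0 \<le> N x"
      using E x(1) by (simp add: symmetric_function_space_def)
    define \<epsilon> where "\<epsilon> = e / (N x + 1)"
    have "0 < \<epsilon>" "\<epsilon> * N x < e"
      using \<open>0 < e\<close> \<open>0 \<le> N x\<close> by (auto simp: \<epsilon>_def field_simps)
    obtain K where "0 < K" and K: "\<And>\<tau>. K \<le> \<tau> \<Longrightarrow> w \<tau> \<le> \<epsilon>"
      using order_tendstoD(2)[OF w(1) \<open>0 < \<epsilon>\<close>] unfolding eventually_at_top_linorder
      by (metis less_imp_le max.cobounded1 max.strict_coboundedI2 order_trans zero_less_one)
    define z where "z s = (if s \<le> K then y s else 0)" for s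
    have "z \<in> E \<inter> L1 \<inter> Linf"
      unfolding z_def using truncation_mem_E_L1_Linf[OF E x \<open>meas y\<close> \<open>0 < K\<close> dom1] .
    moreover have "N (\<lambda>s. y s - z s) \<le> \<epsilon> * N x"
    proof (rule symmetric_space_dominated(2)[OF E x(1) _ \<open>0 < \<epsilon>\<close>])
      show "meas (\<lambda>s. y s - z s)"
        using \<open>z \<in> E \<inter> L1 \<inter> Linf\<close> \<open>meas y\<close> by (auto simp: L1_def meas_def)
      fix \<tau> :: real assume "0 < \<tau>"
      show "ennreal \<bar>y \<tau> - z \<tau>\<bar> \<le> ennreal \<epsilon> * drearr \<tau> x"
      proof (cases "\<tau> \<le> K")
        case False
        then have "ennreal (w \<tau>) * drearr \<tau> x \<le> ennreal \<epsilon> * drearr \<tau> x"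
          using K by (intro mult_right_mono ennreal_leI) auto
        then show ?thesis
          using dom[OF \<open>0 < \<tau>\<close>] False by (simp add: z_def)
      qed (simp add: z_def)
    qed
    then have "N (\<lambda>s. y s - z s) < e"
      using \<open>\<epsilon> * N x < e\<close> by linarith
    ultimately show ?thesis
      by blast
  qed
  moreover have "y \<in> E"
    using dom1 by (intro symmetric_space_dominated(1)[OF E x(1) \<open>meas y\<close> zero_less_one]) simp
  ultimately show ?thesis
    by (simp add: E0_def)
qed

lemma Linf_drearr_real:
  assumes "x \<in> Linf"
  obtains m :: "real \<Rightarrow> real" and B where "antimono m" "\<And>t. 0 \<le> m t" "\<And>t. m t \<le> B"
    "\<And>t. drearr t x = ennreal (m t)"
proof -
  obtain B where "0 \<le> B" and B: "\<And>t. drearr t x \<le> ennreal B"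
    using Linf_drearr_bounded[OF assms] by blast
  define m where "m t = enn2real (drearr t x)" for t
  have m: "drearr t x = ennreal (m t)" for t
    using le_less_trans[OF B[of t] ennreal_less_top] by (simp add: m_def)
  have "antimono m"
  proof (rule antimonoI)
    fix a b :: real assume "a \<le> b"
    then have "ennreal (m b) \<le> ennreal (m a)"
      using drearr_antimono[of a b x] by (simp add: m)
    then show "m b \<le> m a"
      by (simp add: ennreal_le_iff m_def)
  qed
  moreover have "m t \<le> B" for t
    using B[of t] \<open>0 \<le> B\<close> by (simp add: m ennreal_le_iff)
  moreover have "0 \<le> m t" for t
    by (simp add: m_def)
  ultimately show thesis
    using that m by blast
qed

lemma nn_integral_antimono_le_Lorentz:
  assumes "1 \<le> n" and y: "antimono y"
  shows "(\<integral>\<^sup>+ t\<in>{0<..}. ennreal (y t) * ennreal (lorentz_density n t) \<partial>lborel)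
    \<le> 2 * (\<integral>\<^sup>+ t\<in>{0<..}. drearr t y * ennreal (lorentz_density n t) \<partial>lborel)"
proof -
  define h where "h = (\<lambda>u. ennreal (y u) * ennreal (lorentz_density n u) * indicator {0<..} u)"
  have [measurable]: "y \<in> borel_measurable borel"
    using y by (rule borel_measurable_antimono)
  have h_meas [measurable]: "h \<in> borel_measurable borel"
    unfolding h_def lorentz_density_def by measurable
  have h_le: "h (2 * t) \<le> drearr t y * ennreal (lorentz_density n t) * indicator {0<..} t" for t
  proof (cases "0 < t")
    case True
    have "ennreal (y (2 * t)) \<le> drearr t y"
      using True by (intro antimono_le_drearr[OF borel_measurable_imp_meas y]) auto
    have "lorentz_density n (2 * t) \<le> lorentz_density n t"
      using True by (intro lorentz_density_decreasing \<open>1 \<le> n\<close>) auto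
    then have "ennreal (y (2 * t)) * ennreal (lorentz_density n (2 * t))
        \<le> drearr t y * ennreal (lorentz_density n t)"
      using \<open>ennreal (y (2 * t)) \<le> drearr t y\<close> by (intro mult_mono ennreal_leI) simp_all
    then show ?thesis
      using True by (simp add: h_def)
  qed (simp add: h_def)
  have "(\<integral>\<^sup>+ t\<in>{0<..}. ennreal (y t) * ennreal (lorentz_density n t) \<partial>lborel) = integral\<^sup>N lborel h"
    unfolding h_def ..
  also have "\<dots> = 2 * (\<integral>\<^sup>+ t. h (2 * t) \<partial>lborel)"
    using nn_integral_real_affine[OF h_meas, of 2 0] by simp
  also have "\<dots> \<le> 2 * (\<integral>\<^sup>+ t\<in>{0<..}. drearr t y * ennreal (lorentz_density n t) \<partial>lborel)"
    by (intro mult_left_mono nn_integral_mono h_le) simp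
  finally show ?thesis .
qed

lemma not_Lorentz_n1_imp_E0_antimono_divergent:
  assumes E: "symmetric_function_space E N" and x: "x \<in> E \<inter> Linf" "x \<notin> Lorentz_n1 n"
  obtains y where "y \<in> E0 E N" "y \<in> Linf" "antimono y"
    "(\<integral>\<^sup>+ t\<in>{0<..}. ennreal (y t) * ennreal (lorentz_density n t) \<partial>lborel) = \<infinity>"
proof -
  obtain m B where m: "antimono m" "\<And>t. 0 \<le> m t" "\<And>t. m t \<le> B" "\<And>t. drearr t x = ennreal (m t)"
    using Linf_drearr_real[of x] x by auto
  have [measurable]: "m \<in> borel_measurable borel"
    using m(1) by (rule borel_measurable_antimono)
  let ?f = "\<lambda>t. ennreal (m t) * ennreal (lorentz_density n t)"
  have f_meas: "?f \<in> borel_measurable borel"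
    unfolding lorentz_density_def by measurable
  have "(\<integral>\<^sup>+ t\<in>{0<..}. ?f t \<partial>lborel) = \<infinity>"
    using x by (auto simp: Lorentz_n1_iff Linf_def m(4) less_top[symmetric])
  then obtain w where w: "antimono w" "\<And>\<tau>. 0 \<le> w \<tau>" "\<And>\<tau>. w \<tau> \<le> 1" "(w \<longlongrightarrow> 0) at_top"
    and div: "(\<integral>\<^sup>+ t\<in>{0<..}. ?f t * ennreal (w t) \<partial>lborel) = \<infinity>"
    using slowly_vanishing_weight[OF f_meas] by blast
  define y where "y t = m t * w t" for t
  have "antimono y"
    using m(1,2) w(1,2) by (auto simp: y_def antimono_def intro: mult_mono)
  then have "meas y"
    by (intro borel_measurable_imp_meas borel_measurable_antimono)
  have y_nonneg: "0 \<le> y t" and y_le: "y t \<le> m t" for t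
    using m(2) w(2,3) by (simp_all add: y_def mult_left_le)
  have "y \<in> E0 E N"
  proof (rule E0_if_dominated_vanishing[OF E _ _ \<open>meas y\<close> w(4,3)])
    show "ennreal \<bar>y \<tau>\<bar> \<le> ennreal (w \<tau>) * drearr \<tau> x" for \<tau>
      using m(2) w(2) y_nonneg[of \<tau>] by (simp add: y_def m(4) ennreal_mult mult.commute)
  qed (use x in auto)
  moreover have "y \<in> Linf"
  proof -
    have "\<bar>y t\<bar> \<le> B" for t
      using y_nonneg[of t] y_le[of t] m(3)[of t] by simp
    then show ?thesis
      using \<open>meas y\<close> by (auto simp: Linf_def intro!: exI[of _ B] AE_I2)
  qed
  moreover have "(\<integral>\<^sup>+ t\<in>{0<..}. ennreal (y t) * ennreal (lorentz_density n t) \<partial>lborel) = \<infinity>"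
    using m(2) w(2) div by (simp add: y_def ennreal_mult mult_ac)
  ultimately show thesis
    using that \<open>antimono y\<close> by blast
qed

theorem lemma5p8:
  fixes n :: nat and E :: "(real \<Rightarrow> real) set" and N :: "(real \<Rightarrow> real) \<Rightarrow> real"
  assumes "1 \<le> n"
    and "symmetric_function_space E N"
    and "E0 E N \<inter> Linf \<subseteq> Lorentz_n1 n"
  shows "E \<inter> Linf \<subseteq> Lorentz_n1 n"
proof (rule subsetI, rule ccontr)
  fix x assume "x \<in> E \<inter> Linf" "x \<notin> Lorentz_n1 n"
  then obtain y where "y \<in> E0 E N" "y \<in> Linf" "antimono y"
    and div: "(\<integral>\<^sup>+ t\<in>{0<..}. ennreal (y t) * ennreal (lorentz_density n t) \<partial>lborel) = \<infinity>"
    using not_Lorentz_n1_imp_E0_antimono_divergent[OF assms(2)] by blast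
  then have "(\<integral>\<^sup>+ t\<in>{0<..}. drearr t y * ennreal (lorentz_density n t) \<partial>lborel) < \<infinity>"
    using assms(3) by (auto simp: Lorentz_n1_iff)
  then have "2 * (\<integral>\<^sup>+ t\<in>{0<..}. drearr t y * ennreal (lorentz_density n t) \<partial>lborel) < \<infinity>"
    by (simp add: ennreal_mult_less_top)
  then show False
    using nn_integral_antimono_le_Lorentz[OF assms(1) \<open>antimono y\<close>] div by simp
qed

end
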